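(* Let $n\ge 3$ and $J=(x_n+y_n)+I_{n-2}\subseteq R$. Then $J:x_n=\mathfrak p^{+}$.
   Context: Let $\Bbbk$ be a field and $R=\Bbbk[x_1,\dots,x_n,y_1,\dots,y_n]$. For $1\le i<j\le n$ put $f_{ij}=x_iy_j-x_jy_i$ and $g_{ij}=x_ix_j-y_iy_j$. Let $\mathcal I_{K_n}=(g_{ij}\mid 1\le i<j\le n)$. Define $I_0=\mathcal I_{K_n}$ and inductively $I_k=I_{k-1}+(f_{kn})$ for $1\le k\le n-1$. Let $\mathfrak p^{+}=(x_i+y_i\mid i\in[n])$. *)

theory Defs
  imports "HOL-Library.Poly_Mapping"
begin

datatype var = X nat | Y nat

type_synonym 'k mpoly = "(var \<Rightarrow>\<^sub>0 nat) \<Rightarrow>\<^sub>0 'k"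

definition Var :: "var \<Rightarrow> 'k::field mpoly" where
  "Var v = Poly_Mapping.single (Poly_Mapping.single v 1) 1"

abbreviation xv :: "nat \<Rightarrow> 'k::field mpoly" where "xv i \<equiv> Var (X i)"
abbreviation yv :: "nat \<Rightarrow> 'k::field mpoly" where "yv i \<equiv> Var (Y i)"

definition vars :: "'k::field mpoly \<Rightarrow> var set" where
  "vars p = \<Union> (Poly_Mapping.keys ` Poly_Mapping.keys p)"

definition varset :: "nat \<Rightarrow> var set" where
  "varset n = {X i | i. 1 \<le> i \<and> i \<le> n} \<union> {Y i | i. 1 \<le> i \<and> i \<le> n}"

definition polyring :: "nat \<Rightarrow> 'k::field mpoly set" where
  "polyring n = {p. vars p \<subseteq> varset n}"

definition ideal_gen :: "nat \<Rightarrow> 'k::field mpoly set \<Rightarrow> 'k mpoly set" where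
  "ideal_gen n S = {p. \<exists>F c. finite F \<and> F \<subseteq> S \<and> (\<forall>g\<in>F. c g \<in> polyring n)
                        \<and> p = (\<Sum>g\<in>F. c g * g)}"

definition colon :: "nat \<Rightarrow> 'k::field mpoly set \<Rightarrow> 'k mpoly \<Rightarrow> 'k mpoly set" where
  "colon n J f = {g \<in> polyring n. g * f \<in> J}"

definition fij :: "nat \<Rightarrow> nat \<Rightarrow> 'k::field mpoly" where
  "fij i j = xv i * yv j - xv j * yv i"

definition gij :: "nat \<Rightarrow> nat \<Rightarrow> 'k::field mpoly" where
  "gij i j = xv i * xv j - yv i * yv j"

text \<open>Generators of I_k = I_{K_n} + (f_{1n}, ..., f_{kn}).\<close>
definition I_gens :: "nat \<Rightarrow> nat \<Rightarrow> 'k::field mpoly set" where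
  "I_gens n k = {gij i j | i j. 1 \<le> i \<and> i < j \<and> j \<le> n}
              \<union> {fij l n | l. 1 \<le> l \<and> l \<le> k}"

definition I_k :: "nat \<Rightarrow> nat \<Rightarrow> 'k::field mpoly set" where
  "I_k n k = ideal_gen n (I_gens n k)"

definition p_plus :: "nat \<Rightarrow> 'k::field mpoly set" where
  "p_plus n = ideal_gen n {xv i + yv i | i. 1 \<le> i \<and> i \<le> n}"

end

theory Submission
  imports Defs
begin

text \<open>The substitution \<open>y\<^sub>i \<mapsto> -x\<^sub>i\<close> is a ring endomorphism of \<open>R\<close> killing every \<open>g\<^sub>i\<^sub>j\<close>,
  every \<open>f\<^sub>i\<^sub>j\<close> and \<open>x\<^sub>n + y\<^sub>n\<close>, and every polynomial is congruent to its image modulo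
  \<open>p\<^sup>+\<close>. So if \<open>g x\<^sub>n \<in> J\<close>, the image of \<open>g\<close> times \<open>x\<^sub>n\<close> vanishes, hence the image of \<open>g\<close>
  vanishes and \<open>g \<in> p\<^sup>+\<close>. Conversely \<open>(x\<^sub>i + y\<^sub>i) x\<^sub>n = g\<^sub>i\<^sub>n + y\<^sub>i (x\<^sub>n + y\<^sub>n) \<in> J\<close>.\<close>

lemma poly_mapping_eq_sum_single_superset:
  fixes p :: "'a \<Rightarrow>\<^sub>0 'b::comm_monoid_add"
  assumes "finite S" "Poly_Mapping.keys p \<subseteq> S"
  shows "p = (\<Sum>k\<in>S. Poly_Mapping.single k (Poly_Mapping.lookup p k))"
proof (rule poly_mapping_eqI)
  fix k'
  have "Poly_Mapping.lookup (\<Sum>k\<in>S. Poly_Mapping.single k (Poly_Mapping.lookup p k)) k'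
      = (\<Sum>k\<in>S. (Poly_Mapping.lookup p k when k = k'))"
    by (simp add: lookup_sum lookup_single)
  also have "\<dots> = Poly_Mapping.lookup p k'"
  proof (cases "k' \<in> S")
    case True
    then have "(\<Sum>k\<in>S. (Poly_Mapping.lookup p k when k = k'))
        = (\<Sum>k\<in>{k'}. (Poly_Mapping.lookup p k when k = k'))"
      using assms by (intro sum.mono_neutral_right) auto
    then show ?thesis by simp
  next
    case False
    then have "Poly_Mapping.lookup p k' = 0" using assms by (auto simp: in_keys_iff)
    then show ?thesis by (simp add: when_def, intro sum.neutral) auto
  qed
  finally show "Poly_Mapping.lookup p k'
      = Poly_Mapping.lookup (\<Sum>k\<in>S. Poly_Mapping.single k (Poly_Mapping.lookup p k)) k'"
    by simp
qed

lemma poly_mapping_eq_sum_single: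
  fixes p :: "'a \<Rightarrow>\<^sub>0 'b::comm_monoid_add"
  shows "p = (\<Sum>k\<in>Poly_Mapping.keys p. Poly_Mapping.single k (Poly_Mapping.lookup p k))"
  by (rule poly_mapping_eq_sum_single_superset) auto

subsection \<open>Substitution of polynomials for variables\<close>

type_synonym ('v, 'k) poly = "('v \<Rightarrow>\<^sub>0 nat) \<Rightarrow>\<^sub>0 'k"

definition monom_subst :: "('v \<Rightarrow> ('v, 'k::comm_semiring_1) poly) \<Rightarrow> ('v \<Rightarrow>\<^sub>0 nat) \<Rightarrow> ('v, 'k) poly"
  where
  "monom_subst \<sigma> m = (\<Prod>v\<in>Poly_Mapping.keys m. \<sigma> v ^ Poly_Mapping.lookup m v)"

definition poly_subst :: "('v \<Rightarrow> ('v, 'k::comm_semiring_1) poly) \<Rightarrow> ('v, 'k) poly \<Rightarrow> ('v, 'k) poly"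
  where "poly_subst \<sigma> p =
    (\<Sum>m\<in>Poly_Mapping.keys p. Poly_Mapping.single 0 (Poly_Mapping.lookup p m) * monom_subst \<sigma> m)"

lemma monom_subst_superset:
  assumes "finite S" "Poly_Mapping.keys m \<subseteq> S"
  shows "monom_subst \<sigma> m = (\<Prod>v\<in>S. \<sigma> v ^ Poly_Mapping.lookup m v)"
  unfolding monom_subst_def using assms
  by (intro prod.mono_neutral_left) (auto simp: in_keys_iff)

lemma monom_subst_add: "monom_subst \<sigma> (a + b) = monom_subst \<sigma> a * monom_subst \<sigma> b"
proof -
  let ?S = "Poly_Mapping.keys a \<union> Poly_Mapping.keys b"
  have "monom_subst \<sigma> (a + b) = (\<Prod>v\<in>?S. \<sigma> v ^ Poly_Mapping.lookup (a + b) v)"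
    by (rule monom_subst_superset) (auto simp: keys_add)
  also have "\<dots> = (\<Prod>v\<in>?S. \<sigma> v ^ Poly_Mapping.lookup a v * \<sigma> v ^ Poly_Mapping.lookup b v)"
    by (simp add: lookup_add power_add)
  also have "\<dots> = monom_subst \<sigma> a * monom_subst \<sigma> b"
    by (simp add: prod.distrib monom_subst_superset[of ?S a] monom_subst_superset[of ?S b])
  finally show ?thesis .
qed

lemma poly_subst_superset:
  assumes "finite S" "Poly_Mapping.keys p \<subseteq> S"
  shows "poly_subst \<sigma> p =
    (\<Sum>m\<in>S. Poly_Mapping.single 0 (Poly_Mapping.lookup p m) * monom_subst \<sigma> m)"
  unfolding poly_subst_def using assms
  by (intro sum.mono_neutral_left) (auto simp: in_keys_iff)

lemma poly_subst_add: "poly_subst \<sigma> (p + q) = poly_subst \<sigma> p + poly_subst \<sigma> q"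
proof -
  let ?S = "Poly_Mapping.keys p \<union> Poly_Mapping.keys q"
  have "poly_subst \<sigma> (p + q) =
      (\<Sum>m\<in>?S. Poly_Mapping.single 0 (Poly_Mapping.lookup (p + q) m) * monom_subst \<sigma> m)"
    by (rule poly_subst_superset) (auto simp: keys_add)
  also have "\<dots> = poly_subst \<sigma> p + poly_subst \<sigma> q"
    by (simp add: lookup_add single_add distrib_right sum.distrib
        poly_subst_superset[of ?S p] poly_subst_superset[of ?S q])
  finally show ?thesis .
qed

lemma poly_subst_diff:
  fixes p q :: "('v, 'k::comm_ring_1) poly"
  shows "poly_subst \<sigma> (p - q) = poly_subst \<sigma> p - poly_subst \<sigma> q"
proof -
  let ?S = "Poly_Mapping.keys p \<union> Poly_Mapping.keys q"
  have "poly_subst \<sigma> (p - q) =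
      (\<Sum>m\<in>?S. Poly_Mapping.single 0 (Poly_Mapping.lookup (p - q) m) * monom_subst \<sigma> m)"
    by (rule poly_subst_superset) (auto simp: keys_diff)
  also have "\<dots> = poly_subst \<sigma> p - poly_subst \<sigma> q"
    by (simp add: lookup_minus single_diff left_diff_distrib sum_subtractf
        poly_subst_superset[of ?S p] poly_subst_superset[of ?S q])
  finally show ?thesis .
qed

lemma poly_subst_zero [simp]: "poly_subst \<sigma> 0 = 0"
  by (simp add: poly_subst_def)

lemma poly_subst_sum: "poly_subst \<sigma> (\<Sum>i\<in>A. f i) = (\<Sum>i\<in>A. poly_subst \<sigma> (f i))"
  by (induction A rule: infinite_finite_induct) (auto simp: poly_subst_add)

lemma poly_subst_single:
  "poly_subst \<sigma> (Poly_Mapping.single a c) = Poly_Mapping.single 0 c * monom_subst \<sigma> a"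
  by (simp add: poly_subst_def)

lemma single_zero_mult:
  "Poly_Mapping.single 0 (a * b) =
    Poly_Mapping.single 0 a * (Poly_Mapping.single 0 b :: ('v, 'k::comm_semiring_1) poly)"
  by (simp add: mult_single)

lemma poly_subst_mult: "poly_subst \<sigma> (p * q) = poly_subst \<sigma> p * poly_subst \<sigma> q"
proof -
  have "p * q = (\<Sum>a\<in>Poly_Mapping.keys p. Poly_Mapping.single a (Poly_Mapping.lookup p a))
      * (\<Sum>b\<in>Poly_Mapping.keys q. Poly_Mapping.single b (Poly_Mapping.lookup q b))"
    using poly_mapping_eq_sum_single[of p] poly_mapping_eq_sum_single[of q] by simp
  also have "\<dots> = (\<Sum>a\<in>Poly_Mapping.keys p. \<Sum>b\<in>Poly_Mapping.keys q.
      Poly_Mapping.single (a + b) (Poly_Mapping.lookup p a * Poly_Mapping.lookup q b))"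
    by (simp add: sum_product mult_single)
  finally have "poly_subst \<sigma> (p * q) = (\<Sum>a\<in>Poly_Mapping.keys p. \<Sum>b\<in>Poly_Mapping.keys q.
      Poly_Mapping.single 0 (Poly_Mapping.lookup p a * Poly_Mapping.lookup q b) * monom_subst \<sigma> (a + b))"
    by (simp add: poly_subst_sum poly_subst_single)
  also have "\<dots> = (\<Sum>a\<in>Poly_Mapping.keys p. \<Sum>b\<in>Poly_Mapping.keys q.
      (Poly_Mapping.single 0 (Poly_Mapping.lookup p a) * monom_subst \<sigma> a)
      * (Poly_Mapping.single 0 (Poly_Mapping.lookup q b) * monom_subst \<sigma> b))"
    by (simp add: single_zero_mult monom_subst_add ac_simps)
  also have "\<dots> = poly_subst \<sigma> p * poly_subst \<sigma> q"
    by (simp only: poly_subst_def sum_product)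
  finally show ?thesis .
qed

lemma poly_subst_Var: "poly_subst \<sigma> (Var v) = \<sigma> v"
  by (simp add: Var_def poly_subst_single monom_subst_def)

lemma single_one_eq_monom_subst_Var:
  "Poly_Mapping.single m (1::'k::field) = monom_subst Var m"
proof -
  have single_add_one:
      "Poly_Mapping.single (a + b) (1::'k) = Poly_Mapping.single a 1 * Poly_Mapping.single b 1"
    for a b :: "var \<Rightarrow>\<^sub>0 nat"
    by (simp add: mult_single)
  have single_single: "Poly_Mapping.single (Poly_Mapping.single v k) (1::'k) = Var v ^ k" for v k
  proof (induction k)
    case (Suc k)
    have "Poly_Mapping.single v (Suc k) = Poly_Mapping.single v 1 + Poly_Mapping.single v k"
      by (simp add: single_add[symmetric])
    with Suc show ?case
      by (simp add: single_add_one Var_def)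
  qed simp
  have single_sum:
      "Poly_Mapping.single (\<Sum>v\<in>S. f v) (1::'k) = (\<Prod>v\<in>S. Poly_Mapping.single (f v) 1)"
    for S :: "var set" and f :: "var \<Rightarrow> var \<Rightarrow>\<^sub>0 nat"
    by (induction S rule: infinite_finite_induct) (auto simp: single_add_one)
  have "Poly_Mapping.single m (1::'k) =
      Poly_Mapping.single (\<Sum>v\<in>Poly_Mapping.keys m. Poly_Mapping.single v (Poly_Mapping.lookup m v)) 1"
    using poly_mapping_eq_sum_single[of m] by simp
  also have "\<dots> =
      (\<Prod>v\<in>Poly_Mapping.keys m. Poly_Mapping.single (Poly_Mapping.single v (Poly_Mapping.lookup m v)) 1)"
    by (rule single_sum)
  also have "\<dots> = monom_subst Var m"
    by (simp add: single_single monom_subst_def)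
  finally show ?thesis .
qed

lemma mult_Var_eq_0D:
  fixes p :: "'k::field mpoly"
  assumes "p * Var v = 0"
  shows "p = 0"
proof (rule poly_mapping_eqI)
  fix k
  let ?u = "Poly_Mapping.single v 1"
  have "p * Var v =
      (\<Sum>a\<in>Poly_Mapping.keys p. Poly_Mapping.single (a + ?u) (Poly_Mapping.lookup p a))"
    by (subst poly_mapping_eq_sum_single[of p]) (simp add: Var_def sum_distrib_right mult_single)
  then have "Poly_Mapping.lookup (p * Var v) (k + ?u) = Poly_Mapping.lookup p k"
    by (simp add: lookup_sum lookup_single when_def in_keys_iff)
  then show "Poly_Mapping.lookup p k = Poly_Mapping.lookup 0 k"
    using assms by simp
qed

lemma polyring_iff: "p \<in> polyring n \<longleftrightarrow> (\<forall>m\<in>Poly_Mapping.keys p. Poly_Mapping.keys m \<subseteq> varset n)"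
  by (auto simp: polyring_def vars_def)

lemma polyring_zero [simp]: "0 \<in> polyring n"
  by (simp add: polyring_iff)

lemma polyring_add: "p \<in> polyring n \<Longrightarrow> q \<in> polyring n \<Longrightarrow> p + q \<in> polyring n"
  using keys_add[of p q] by (auto simp: polyring_iff)

lemma polyring_uminus: "p \<in> polyring n \<Longrightarrow> - p \<in> polyring n"
  by (auto simp: polyring_iff)

lemma polyring_mult:
  assumes p: "p \<in> polyring n" and q: "q \<in> polyring n"
  shows "p * q \<in> polyring n"
  unfolding polyring_iff
proof
  fix m assume "m \<in> Poly_Mapping.keys (p * q)"
  then obtain a b where "a \<in> Poly_Mapping.keys p" "b \<in> Poly_Mapping.keys q" "m = a + b"
    using keys_mult[of p q] by blast
  moreover have "Poly_Mapping.keys a \<subseteq> varset n" "Poly_Mapping.keys b \<subseteq> varset n"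
    using p q \<open>a \<in> Poly_Mapping.keys p\<close> \<open>b \<in> Poly_Mapping.keys q\<close> by (auto simp: polyring_iff)
  ultimately show "Poly_Mapping.keys m \<subseteq> varset n"
    using keys_add[of a b] by blast
qed

lemma polyring_sum: "(\<And>i. i \<in> A \<Longrightarrow> f i \<in> polyring n) \<Longrightarrow> (\<Sum>i\<in>A. f i) \<in> polyring n"
  by (induction A rule: infinite_finite_induct) (auto intro: polyring_add)

lemma polyring_single: "Poly_Mapping.keys m \<subseteq> varset n \<Longrightarrow> Poly_Mapping.single m c \<in> polyring n"
  by (auto simp: polyring_iff)

lemma polyring_const: "Poly_Mapping.single 0 c \<in> polyring n"
  by (rule polyring_single) simp

lemma polyring_one [simp]: "1 \<in> polyring n"
  using polyring_const[where n=n and c=1] by simp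

lemma polyring_Var: "v \<in> varset n \<Longrightarrow> Var v \<in> polyring n"
  unfolding Var_def by (rule polyring_single) simp

lemma polyring_X: "1 \<le> i \<Longrightarrow> i \<le> n \<Longrightarrow> xv i \<in> polyring n"
  by (rule polyring_Var) (auto simp: varset_def)

lemma polyring_Y: "1 \<le> i \<Longrightarrow> i \<le> n \<Longrightarrow> yv i \<in> polyring n"
  by (rule polyring_Var) (auto simp: varset_def)

lemma ideal_gen_zero: "0 \<in> ideal_gen n S"
  unfolding ideal_gen_def by (intro CollectI exI[of _ "{}"]) auto

lemma ideal_gen_mult_generator: "s \<in> S \<Longrightarrow> c \<in> polyring n \<Longrightarrow> c * s \<in> ideal_gen n S"
  unfolding ideal_gen_def by (intro CollectI exI[of _ "{s}"] exI[of _ "\<lambda>_. c"]) auto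

lemma ideal_gen_add:
  assumes "p \<in> ideal_gen n S" "q \<in> ideal_gen n S"
  shows "p + q \<in> ideal_gen n S"
proof -
  obtain F1 c1 where 1: "finite F1" "F1 \<subseteq> S" "\<forall>g\<in>F1. c1 g \<in> polyring n" "p = (\<Sum>g\<in>F1. c1 g * g)"
    using assms(1) unfolding ideal_gen_def by blast
  obtain F2 c2 where 2: "finite F2" "F2 \<subseteq> S" "\<forall>g\<in>F2. c2 g \<in> polyring n" "q = (\<Sum>g\<in>F2. c2 g * g)"
    using assms(2) unfolding ideal_gen_def by blast
  define c where "c g = (if g \<in> F1 then c1 g else 0) + (if g \<in> F2 then c2 g else 0)" for g
  have "(\<Sum>g\<in>F1 \<union> F2. c g * g) = (\<Sum>g\<in>F1 \<union> F2. (if g \<in> F1 then c1 g * g else 0))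
      + (\<Sum>g\<in>F1 \<union> F2. (if g \<in> F2 then c2 g * g else 0))"
    unfolding sum.distrib[symmetric] by (rule sum.cong) (auto simp: c_def distrib_right)
  also have "\<dots> = p + q"
    using 1 2 by (simp add: sum.If_cases Int_absorb1 Int_absorb2)
  finally have sum_eq: "p + q = (\<Sum>g\<in>F1 \<union> F2. c g * g)" by simp
  have "\<forall>g\<in>F1 \<union> F2. c g \<in> polyring n"
    using 1 2 by (auto simp: c_def intro!: polyring_add)
  with 1 2 sum_eq show ?thesis
    unfolding ideal_gen_def by (intro CollectI exI[of _ "F1 \<union> F2"] exI[of _ c] conjI) auto
qed

lemma ideal_gen_mult:
  assumes "p \<in> ideal_gen n S" "r \<in> polyring n"
  shows "r * p \<in> ideal_gen n S"
proof -
  obtain F c where F: "finite F" "F \<subseteq> S" "\<forall>g\<in>F. c g \<in> polyring n" "p = (\<Sum>g\<in>F. c g * g)"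
    using assms(1) unfolding ideal_gen_def by blast
  have "r * p = (\<Sum>g\<in>F. (r * c g) * g)"
    using F by (simp add: sum_distrib_left mult.assoc)
  moreover have "\<forall>g\<in>F. r * c g \<in> polyring n"
    using F assms(2) by (auto intro: polyring_mult)
  ultimately show ?thesis
    using F unfolding ideal_gen_def by (intro CollectI exI[of _ F] exI[of _ "\<lambda>g. r * c g"] conjI) auto
qed

lemma ideal_gen_sum: "(\<And>i. i \<in> A \<Longrightarrow> f i \<in> ideal_gen n S) \<Longrightarrow> (\<Sum>i\<in>A. f i) \<in> ideal_gen n S"
  by (induction A rule: infinite_finite_induct) (auto intro: ideal_gen_add ideal_gen_zero)

lemma ideal_gen_subset_polyring: "S \<subseteq> polyring n \<Longrightarrow> ideal_gen n S \<subseteq> polyring n"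
  unfolding ideal_gen_def by (auto intro!: polyring_sum polyring_mult)

lemma poly_subst_ideal_gen_eq_0:
  assumes "\<And>s. s \<in> S \<Longrightarrow> poly_subst \<sigma> s = 0" "p \<in> ideal_gen n S"
  shows "poly_subst \<sigma> p = 0"
proof -
  obtain F c where "F \<subseteq> S" "p = (\<Sum>g\<in>F. c g * g)"
    using assms(2) unfolding ideal_gen_def by blast
  then show ?thesis
    using assms(1) by (auto simp: poly_subst_sum poly_subst_mult intro!: sum.neutral)
qed

definition cong_mod :: "nat \<Rightarrow> 'k::field mpoly set \<Rightarrow> 'k mpoly \<Rightarrow> 'k mpoly \<Rightarrow> bool" where
  "cong_mod n S p q \<longleftrightarrow> p - q \<in> ideal_gen n S \<and> p \<in> polyring n \<and> q \<in> polyring n"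

lemma cong_mod_refl: "p \<in> polyring n \<Longrightarrow> cong_mod n S p p"
  by (simp add: cong_mod_def ideal_gen_zero)

lemma cong_mod_mult:
  assumes 1: "cong_mod n S p1 q1" and 2: "cong_mod n S p2 q2"
  shows "cong_mod n S (p1 * p2) (q1 * q2)"
proof -
  have "p1 * p2 - q1 * q2 = p1 * (p2 - q2) + q2 * (p1 - q1)"
    by (simp add: algebra_simps)
  then show ?thesis
    using 1 2 unfolding cong_mod_def by (auto intro!: ideal_gen_add ideal_gen_mult polyring_mult)
qed

lemma cong_mod_power: "cong_mod n S p q \<Longrightarrow> cong_mod n S (p ^ k) (q ^ k)"
  by (induction k) (auto intro: cong_mod_mult cong_mod_refl)

lemma cong_mod_prod:
  "(\<And>i. i \<in> A \<Longrightarrow> cong_mod n S (f i) (g i)) \<Longrightarrow> cong_mod n S (\<Prod>i\<in>A. f i) (\<Prod>i\<in>A. g i)"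
  by (induction A rule: infinite_finite_induct) (auto intro: cong_mod_mult cong_mod_refl)

subsection \<open>The substitution \<open>y\<^sub>i \<mapsto> -x\<^sub>i\<close>\<close>

definition y_to_minus_x :: "var \<Rightarrow> 'k::field mpoly" where
  "y_to_minus_x v = (case v of X i \<Rightarrow> xv i | Y i \<Rightarrow> - xv i)"

lemma y_to_minus_x_simps [simp]: "y_to_minus_x (X i) = xv i" "y_to_minus_x (Y i) = - xv i"
  by (simp_all add: y_to_minus_x_def)

abbreviation p_plus_gens :: "nat \<Rightarrow> 'k::field mpoly set" where
  "p_plus_gens n \<equiv> {xv i + yv i | i. 1 \<le> i \<and> i \<le> n}"

lemma p_plus_gens_subset_polyring: "p_plus_gens n \<subseteq> polyring n"
  by (auto intro!: polyring_add polyring_X polyring_Y)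

lemma cong_mod_p_plus_Var:
  assumes "v \<in> varset n"
  shows "cong_mod n (p_plus_gens n) (Var v) (y_to_minus_x v)"
proof -
  obtain i where i: "1 \<le> i" "i \<le> n" "v = X i \<or> v = Y i"
    using assms by (auto simp: varset_def)
  show ?thesis
  proof (cases "v = X i")
    case True
    then show ?thesis using i by (simp add: cong_mod_refl polyring_X)
  next
    case False
    have "1 * (xv i + yv i) \<in> ideal_gen n (p_plus_gens n)"
      by (rule ideal_gen_mult_generator) (use i in auto)
    then show ?thesis
      using False i by (simp add: cong_mod_def polyring_X polyring_Y polyring_uminus add.commute)
  qed
qed

lemma diff_poly_subst_y_to_minus_x_in_p_plus:
  fixes g :: "'k::field mpoly"
  assumes g: "g \<in> polyring n"
  shows "g - poly_subst y_to_minus_x g \<in> p_plus n"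
proof -
  have "g = (\<Sum>m\<in>Poly_Mapping.keys g.
      Poly_Mapping.single 0 (Poly_Mapping.lookup g m) * Poly_Mapping.single m 1)"
    using poly_mapping_eq_sum_single[of g] by (simp add: mult_single)
  then have "g - poly_subst y_to_minus_x g = (\<Sum>m\<in>Poly_Mapping.keys g.
      Poly_Mapping.single 0 (Poly_Mapping.lookup g m) * (monom_subst Var m - monom_subst y_to_minus_x m))"
    by (simp add: poly_subst_def right_diff_distrib sum_subtractf single_one_eq_monom_subst_Var)
  also have "\<dots> \<in> p_plus n"
    unfolding p_plus_def
  proof (intro ideal_gen_sum ideal_gen_mult polyring_const)
    fix m assume "m \<in> Poly_Mapping.keys g"
    then have "Poly_Mapping.keys m \<subseteq> varset n"
      using g by (auto simp: polyring_iff)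
    then have "cong_mod n (p_plus_gens n) (monom_subst Var m) (monom_subst y_to_minus_x m :: 'k mpoly)"
      unfolding monom_subst_def by (intro cong_mod_prod cong_mod_power cong_mod_p_plus_Var) auto
    then show "monom_subst Var m - monom_subst y_to_minus_x m \<in> (ideal_gen n (p_plus_gens n) :: 'k mpoly set)"
      by (simp add: cong_mod_def)
  qed
  finally show ?thesis .
qed

subsection \<open>The colon ideal\<close>

abbreviation J_gens :: "nat \<Rightarrow> nat \<Rightarrow> 'k::field mpoly set" where
  "J_gens n k \<equiv> {xv n + yv n} \<union> I_gens n k"

lemma colon_subset_p_plus: "colon n (ideal_gen n (J_gens n k :: 'k::field mpoly set)) (xv n) \<subseteq> p_plus n"
proof
  fix g :: "'k mpoly"
  assume "g \<in> colon n (ideal_gen n (J_gens n k)) (xv n)"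
  then have g: "g \<in> polyring n" "g * xv n \<in> ideal_gen n (J_gens n k)"
    by (simp_all add: colon_def)
  have "poly_subst y_to_minus_x (g * xv n) = 0"
    by (rule poly_subst_ideal_gen_eq_0[OF _ g(2)])
      (auto simp: I_gens_def gij_def fij_def poly_subst_add poly_subst_diff poly_subst_mult
        poly_subst_Var mult.commute)
  then have "poly_subst y_to_minus_x g * xv n = 0"
    by (simp add: poly_subst_mult poly_subst_Var)
  then have "poly_subst y_to_minus_x g = 0"
    by (rule mult_Var_eq_0D)
  then show "g \<in> p_plus n"
    using diff_poly_subst_y_to_minus_x_in_p_plus[OF g(1)] by simp
qed

lemma p_plus_gen_mult_xn_in_J:
  assumes i: "1 \<le> i" "i \<le> n"
  shows "(xv i + yv i) * xv n \<in> ideal_gen n (J_gens n k :: 'k::field mpoly set)"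
proof (cases "i = n")
  case True
  have "xv n * (xv n + yv n) \<in> ideal_gen n (J_gens n k)"
    using i by (intro ideal_gen_mult_generator polyring_X) auto
  then show ?thesis
    using True by (simp add: mult.commute)
next
  case False
  have "gij i n \<in> I_gens n k"
    using i False unfolding I_gens_def by (intro UnI1 CollectI exI[of _ i] exI[of _ n]) auto
  then have "1 * gij i n + yv i * (xv n + yv n) \<in> ideal_gen n (J_gens n k)"
    using i by (intro ideal_gen_add ideal_gen_mult_generator polyring_Y) auto
  moreover have "(xv i + yv i) * xv n = 1 * gij i n + yv i * (xv n + (yv n :: 'k mpoly))"
    by (simp add: gij_def algebra_simps)
  ultimately show ?thesis
    by simp
qed

lemma p_plus_subset_colon: "p_plus n \<subseteq> colon n (ideal_gen n (J_gens n k :: 'k::field mpoly set)) (xv n)"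
proof
  fix g :: "'k mpoly"
  assume g: "g \<in> p_plus n"
  then obtain F c where F: "F \<subseteq> p_plus_gens n" "\<forall>h\<in>F. c h \<in> polyring n" "g = (\<Sum>h\<in>F. c h * h)"
    unfolding p_plus_def ideal_gen_def by blast
  have "g * xv n = (\<Sum>h\<in>F. c h * (h * xv n))"
    using F(3) by (simp add: sum_distrib_right mult.assoc)
  also have "\<dots> \<in> ideal_gen n (J_gens n k)"
  proof (rule ideal_gen_sum, rule ideal_gen_mult)
    fix h :: "'k mpoly"
    assume "h \<in> F"
    then obtain i where "1 \<le> i" "i \<le> n" "h = xv i + yv i"
      using F(1) by blast
    then show "h * xv n \<in> ideal_gen n (J_gens n k)"
      using p_plus_gen_mult_xn_in_J by blast
  next
    fix h assume "h \<in> F"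
    then show "c h \<in> polyring n"
      using F(2) by blast
  qed
  finally have "g * xv n \<in> ideal_gen n (J_gens n k)" .
  moreover have "g \<in> polyring n"
    using g ideal_gen_subset_polyring[OF p_plus_gens_subset_polyring] unfolding p_plus_def by blast
  ultimately show "g \<in> colon n (ideal_gen n (J_gens n k)) (xv n)"
    by (simp add: colon_def)
qed

theorem lemma3p5:
  fixes n :: nat
  assumes "n \<ge> 3"
  shows "colon n (ideal_gen n ({xv n + yv n} \<union> I_gens n (n - 2)) :: 'k::field mpoly set) (xv n)
           = p_plus n"
  by (intro equalityI colon_subset_p_plus p_plus_subset_colon)

end
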